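(* Let $t$ be a positive integer and let $\mathcal{B}$ be a bramble of order at least $2t+1$ in a graph $G$. Then there exist (1) two vertex-disjoint paths $P_1$ and $P_2$ in $G$ such that both $\mathcal{B}_{V(P_1)}$ and $\mathcal{B}_{V(P_2)}$ have order exactly $t$, and (2) pairwise vertex-disjoint paths $Q_1,\dots,Q_t$ in $G$, each of which has one endpoint on $P_1$ and one endpoint on $P_2$ and is internally disjoint from $P_1\cup P_2$.
   Context: All graphs are finite and simple. A bramble $\mathcal{B}$ in a graph $G$ is a family of connected subgraphs of $G$ such that every two of them share a vertex or are joined by an edge of $G$. A hitting set for $\mathcal{B}$ is a set of vertices intersecting every element of $\mathcal{B}$; the order of $\mathcal{B}$ is the minimum size of a hitting set. Any subset of a bramble is a bramble. For $X\subseteq V(G)$, $\mathcal{B}_X$ denotes the set of elements of $\mathcal{B}$ that intersect $X$. *)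

theory Defs
  imports Main
begin

definition graph :: "'a set \<Rightarrow> ('a \<Rightarrow> 'a \<Rightarrow> bool) \<Rightarrow> bool" where
  "graph V E \<longleftrightarrow> finite V \<and> (\<forall>u v. E u v \<longrightarrow> E v u) \<and> (\<forall>v. \<not> E v v)
     \<and> (\<forall>u v. E u v \<longrightarrow> u \<in> V \<and> v \<in> V)"

definition is_path :: "'a set \<Rightarrow> ('a \<Rightarrow> 'a \<Rightarrow> bool) \<Rightarrow> 'a list \<Rightarrow> bool" where
  "is_path V E p \<longleftrightarrow> p \<noteq> [] \<and> distinct p \<and> set p \<subseteq> V
     \<and> (\<forall>i. Suc i < length p \<longrightarrow> E (p ! i) (p ! Suc i))"

definition inner_vertices :: "'a list \<Rightarrow> 'a set" where
  "inner_vertices p = set (butlast (tl p))"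

definition connected_set :: "'a set \<Rightarrow> ('a \<Rightarrow> 'a \<Rightarrow> bool) \<Rightarrow> 'a set \<Rightarrow> bool" where
  "connected_set V E X \<longleftrightarrow> X \<noteq> {} \<and> X \<subseteq> V \<and>
     (\<forall>u\<in>X. \<forall>v\<in>X. \<exists>p. is_path V E p \<and> set p \<subseteq> X \<and> hd p = u \<and> last p = v)"

definition touch :: "('a \<Rightarrow> 'a \<Rightarrow> bool) \<Rightarrow> 'a set \<Rightarrow> 'a set \<Rightarrow> bool" where
  "touch E X Y \<longleftrightarrow> X \<inter> Y \<noteq> {} \<or> (\<exists>u\<in>X. \<exists>v\<in>Y. E u v)"

text \<open>A bramble, with each connected subgraph represented by its vertex set.\<close>
definition bramble :: "'a set \<Rightarrow> ('a \<Rightarrow> 'a \<Rightarrow> bool) \<Rightarrow> 'a set set \<Rightarrow> bool" where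
  "bramble V E B \<longleftrightarrow> (\<forall>X\<in>B. connected_set V E X) \<and> (\<forall>X\<in>B. \<forall>Y\<in>B. touch E X Y)"

definition hitting_set :: "'a set \<Rightarrow> 'a set set \<Rightarrow> 'a set \<Rightarrow> bool" where
  "hitting_set V B S \<longleftrightarrow> S \<subseteq> V \<and> (\<forall>X\<in>B. S \<inter> X \<noteq> {})"

definition bramble_order :: "'a set \<Rightarrow> 'a set set \<Rightarrow> nat" where
  "bramble_order V B = (LEAST k. \<exists>S. hitting_set V B S \<and> card S = k)"

definition restrict_bramble :: "'a set set \<Rightarrow> 'a set \<Rightarrow> 'a set set" where
  "restrict_bramble B X = {Y \<in> B. Y \<inter> X \<noteq> {}}"

end

theory Submission
  imports Defs
begin

text \<open>
  Some path meets every element of a bramble: take a path P meeting as many elements as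
  possible; if X misses P, every element meeting P touches X, and rerouting P at its first
  vertex from which X is reachable without returning to P meets strictly more elements.
  Adding its vertices one at a time raises the order of the elements met by at most one,
  so a prefix P1 meets a sub-bramble of order exactly t. The elements missing P1 still have
  order at least t + 1, and the same argument inside their union gives P2, disjoint from P1.
  A set S of fewer than t vertices misses an element meeting P1 and one meeting P2; as these
  touch, S does not separate P1 from P2. So Menger's theorem, proved by Goering's induction
  on the number of edges, yields t disjoint P1--P2 paths meeting P1 and P2 only at their ends.
\<close>

lemma is_path_iff_successively:
  "is_path V E p \<longleftrightarrow> p \<noteq> [] \<and> distinct p \<and> set p \<subseteq> V \<and> successively E p"
  unfolding is_path_def successively_conv_nth by auto

lemma is_path_single [simp]: "is_path V E [v] \<longleftrightarrow> v \<in> V"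
  by (auto simp: is_path_iff_successively)

lemma is_path_append:
  assumes "xs \<noteq> []" "ys \<noteq> []"
  shows "is_path V E (xs @ ys) \<longleftrightarrow>
    is_path V E xs \<and> is_path V E ys \<and> set xs \<inter> set ys = {} \<and> E (last xs) (hd ys)"
  using assms by (auto simp: is_path_iff_successively successively_append_iff)

lemma is_path_prefix: "is_path V E (xs @ ys) \<Longrightarrow> xs \<noteq> [] \<Longrightarrow> is_path V E xs"
  by (cases "ys = []") (auto simp: is_path_append)

lemma is_path_suffix: "is_path V E (xs @ ys) \<Longrightarrow> ys \<noteq> [] \<Longrightarrow> is_path V E ys"
  by (cases "xs = []") (auto simp: is_path_append)

lemma is_path_take: "is_path V E P \<Longrightarrow> 0 < n \<Longrightarrow> is_path V E (take n P)"
  by (rule is_path_prefix[of V E _ "drop n P"]) (auto simp: is_path_iff_successively)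

lemma is_path_drop: "is_path V E P \<Longrightarrow> i < length P \<Longrightarrow> is_path V E (drop i P)"
  by (rule is_path_suffix[of V E "take i P"]) auto

lemma is_path_rev:
  assumes "graph V E"
  shows "is_path V E (rev p) \<longleftrightarrow> is_path V E p"
proof -
  have "(\<lambda>x y. E y x) = E" using assms unfolding graph_def by blast
  then have "successively (\<lambda>x y. E y x) p = successively E p" by (rule arg_cong)
  then show ?thesis by (simp add: is_path_iff_successively)
qed

lemma is_path_mono:
  "is_path V E p \<Longrightarrow> (\<And>u v. E u v \<Longrightarrow> E' u v) \<Longrightarrow> is_path V E' p"
  by (auto simp: is_path_iff_successively elim: successively_mono)

lemma walk_contains_path:
  assumes "p \<noteq> []" "set p \<subseteq> V" "successively E p"
  shows "\<exists>q. is_path V E q \<and> hd q = hd p \<and> last q = last p \<and> set q \<subseteq> set p"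
  using assms
proof (induction "length p" arbitrary: p rule: less_induct)
  case less
  show ?case
  proof (cases "distinct p")
    case True
    then show ?thesis using less.prems by (auto simp: is_path_iff_successively)
  next
    case False
    then obtain xs ys zs y where p: "p = xs @ [y] @ ys @ [y] @ zs"
      using not_distinct_decomp by blast
    define p' where "p' = xs @ [y] @ zs"
    have "successively E p'"
      using less.prems(3) by (auto simp: p p'_def successively_append_iff successively_Cons)
    moreover have "length p' < length p" "p' \<noteq> []" "set p' \<subseteq> V"
      using less.prems by (auto simp: p p'_def)
    ultimately obtain q where "is_path V E q" "hd q = hd p'" "last q = last p'" "set q \<subseteq> set p'"
      using less.hyps by blast
    moreover have "hd p' = hd p" "last p' = last p" "set p' \<subseteq> set p"
      by (cases xs; auto simp: p p'_def)+
    ultimately show ?thesis by auto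
  qed
qed

lemma path_concat:
  assumes "is_path V E p" "is_path V E q" "last p = hd q \<or> E (last p) (hd q)"
  shows "\<exists>r. is_path V E r \<and> hd r = hd p \<and> last r = last q \<and> set r \<subseteq> set p \<union> set q"
proof -
  define w where "w = (if last p = hd q then p @ tl q else p @ q)"
  have "w \<noteq> []" "hd w = hd p" "set w \<subseteq> set p \<union> set q" "last w = last q"
    using assms by (cases q; auto simp: w_def is_path_iff_successively)+
  moreover have "successively E w" "set w \<subseteq> V"
    using assms by (cases q; auto simp: w_def is_path_iff_successively successively_append_iff
        successively_Cons)+
  ultimately show ?thesis using walk_contains_path[of w V E] by fastforce
qed

lemma connected_touch_path:
  assumes "connected_set V E X" "connected_set V E Y" "touch E X Y" "a \<in> X" "b \<in> Y"
  shows "\<exists>p. is_path V E p \<and> hd p = a \<and> last p = b \<and> set p \<subseteq> X \<union> Y"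
proof -
  obtain u v where uv: "u \<in> X" "v \<in> Y" "u = v \<or> E u v"
    using assms(3) unfolding touch_def by blast
  obtain p where p: "is_path V E p" "set p \<subseteq> X" "hd p = a" "last p = u"
    using assms(1,4) uv(1) unfolding connected_set_def by blast
  obtain q where q: "is_path V E q" "set q \<subseteq> Y" "hd q = v" "last q = b"
    using assms(2,5) uv(2) unfolding connected_set_def by blast
  show ?thesis using path_concat[OF p(1) q(1)] p q uv(3) by fastforce
qed

lemma connected_touch_path_leaving:
  assumes "connected_set V E X" "connected_set V E Y" "touch E X Y" "X \<inter> W \<noteq> {}" "Y \<inter> W = {}"
  shows "\<exists>q. is_path V E q \<and> hd q \<in> X \<inter> W \<and> last q \<in> Y \<and> set q \<subseteq> X \<union> Y
    \<and> set (tl q) \<inter> W = {}"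
proof -
  obtain a b where a: "a \<in> X" "a \<in> W" and b: "b \<in> Y"
    using assms(2,4) unfolding connected_set_def by blast
  obtain r where r: "is_path V E r" "hd r = a" "last r = b" "set r \<subseteq> X \<union> Y"
    using connected_touch_path[OF assms(1-3) a(1) b] by blast
  have "a \<in> set r" using r(1,2) by (auto simp: is_path_iff_successively)
  then obtain ys w zs where r_split: "r = ys @ w # zs" "w \<in> W" "\<forall>z\<in>set zs. z \<notin> W"
    using split_list_last_prop[of r "\<lambda>z. z \<in> W"] a(2) by blast
  have "is_path V E (w # zs)" using is_path_suffix r(1) r_split(1) by blast
  moreover have "w \<in> X" using r_split r(4) assms(5) by auto
  moreover have "last (w # zs) = b" using r(3) r_split(1) by simp
  ultimately show ?thesis using r_split r(4) b by (intro exI[of _ "w # zs"]) auto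
qed

section \<open>Bramble order\<close>

lemma hitting_set_subset: "hitting_set V B S \<Longrightarrow> B' \<subseteq> B \<Longrightarrow> hitting_set V B' S"
  unfolding hitting_set_def by blast

lemma bramble_order_le_card: "hitting_set V B S \<Longrightarrow> bramble_order V B \<le> card S"
  unfolding bramble_order_def by (auto intro: Least_le)

lemma bramble_order_hitting_set:
  assumes "hitting_set V B V"
  obtains S where "hitting_set V B S" "card S = bramble_order V B"
  using LeastI_ex[of "\<lambda>k. \<exists>S. hitting_set V B S \<and> card S = k"] assms
  unfolding bramble_order_def by blast

lemma bramble_order_empty [simp]: "bramble_order V {} = 0"
  using bramble_order_le_card[of V "{}" "{}"] by (simp add: hitting_set_def)

lemma bramble_order_mono:
  assumes "hitting_set V B V" "B' \<subseteq> B"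
  shows "bramble_order V B' \<le> bramble_order V B"
proof -
  obtain S where "hitting_set V B S" "card S = bramble_order V B"
    using bramble_order_hitting_set[OF assms(1)] .
  then show ?thesis using bramble_order_le_card hitting_set_subset[OF _ assms(2)] by metis
qed

lemma bramble_order_Un_le:
  assumes "hitting_set V B1 V" "hitting_set V B2 V"
  shows "bramble_order V (B1 \<union> B2) \<le> bramble_order V B1 + bramble_order V B2"
proof -
  obtain S1 where S1: "hitting_set V B1 S1" "card S1 = bramble_order V B1"
    using bramble_order_hitting_set[OF assms(1)] .
  obtain S2 where S2: "hitting_set V B2 S2" "card S2 = bramble_order V B2"
    using bramble_order_hitting_set[OF assms(2)] .
  have "hitting_set V (B1 \<union> B2) (S1 \<union> S2)" using S1 S2 unfolding hitting_set_def by auto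
  then have "bramble_order V (B1 \<union> B2) \<le> card (S1 \<union> S2)"
    by (rule bramble_order_le_card)
  also have "\<dots> \<le> card S1 + card S2" by (rule card_Un_le)
  finally show ?thesis using S1 S2 by simp
qed

lemma bramble_order_through_vertex:
  "v \<in> V \<Longrightarrow> bramble_order V {X\<in>B. v \<in> X} \<le> 1"
  using bramble_order_le_card[of V "{X\<in>B. v \<in> X}" "{v}"] by (auto simp: hitting_set_def)

lemma nat_ivt_unit_steps:
  fixes f :: "nat \<Rightarrow> nat"
  assumes "\<forall>i<n. f (Suc i) \<le> f i + 1" "f 0 \<le> t" "t \<le> f n"
  shows "\<exists>i\<le>n. f i = t"
  using assms
proof (induction n)
  case (Suc n)
  show ?case
  proof (cases "t \<le> f n")
    case True
    then show ?thesis using Suc by (metis le_SucI less_SucI)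
  next
    case False
    then show ?thesis using Suc.prems by (intro exI[of _ "Suc n"]) auto
  qed
qed simp

lemma bramble_order_take:
  assumes "hitting_set V B V" "set P \<subseteq> V"
    and "t \<le> bramble_order V (restrict_bramble B (set P))"
  shows "\<exists>n\<le>length P. bramble_order V (restrict_bramble B (set (take n P))) = t"
proof -
  define f where "f n = bramble_order V (restrict_bramble B (set (take n P)))" for n
  have hits: "hitting_set V (restrict_bramble B W) V" for W
    using assms(1) by (rule hitting_set_subset) (auto simp: restrict_bramble_def)
  have "f (Suc i) \<le> f i + 1" if "i < length P" for i
  proof -
    have "restrict_bramble B (set (take (Suc i) P))
        = restrict_bramble B (set (take i P)) \<union> {X\<in>B. P ! i \<in> X}"
      using that by (auto simp: take_Suc_conv_app_nth restrict_bramble_def)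
    moreover have "hitting_set V {X\<in>B. P ! i \<in> X} V"
      using assms(1) by (rule hitting_set_subset) blast
    ultimately have "f (Suc i) \<le> f i + bramble_order V {X\<in>B. P ! i \<in> X}"
      unfolding f_def using bramble_order_Un_le[OF hits] by metis
    also have "bramble_order V {X\<in>B. P ! i \<in> X} \<le> 1"
      using assms(2) that by (intro bramble_order_through_vertex) auto
    finally show ?thesis by simp
  qed
  moreover have "f 0 = 0" by (simp add: f_def restrict_bramble_def)
  moreover have "t \<le> f (length P)" using assms(3) by (simp add: f_def)
  ultimately show ?thesis using nat_ivt_unit_steps[of "length P" f t] unfolding f_def by auto
qed

section \<open>A path meeting every element of a bramble\<close>

lemma bramble_connected: "bramble V E B \<Longrightarrow> X \<in> B \<Longrightarrow> connected_set V E X"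
  by (simp add: bramble_def)

lemma bramble_touch: "bramble V E B \<Longrightarrow> X \<in> B \<Longrightarrow> Y \<in> B \<Longrightarrow> touch E X Y"
  by (simp add: bramble_def)

lemma path_reroute:
  assumes "graph V E" "is_path V E P" "i < length P" "is_path V E q" "hd q = P ! i"
    "last q \<notin> set P" "set (tl q) \<inter> set P = {}"
  obtains P' where "is_path V E P'" "set P' \<subseteq> set P \<union> set q" "last q \<in> set P'"
    "\<And>m. i \<le> m \<Longrightarrow> m < length P \<Longrightarrow> P ! m \<in> set P'"
proof -
  have "tl q \<noteq> []"
    using assms(3-6) nth_mem[OF assms(3)] by (cases q) (auto simp: is_path_def)
  have "is_path V E (rev (drop i P))" using is_path_rev[OF assms(1)] is_path_drop[OF assms(2,3)] by blast
  moreover have "last (rev (drop i P)) = hd q" using assms(3,5) by (simp add: last_rev hd_drop_conv_nth)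
  moreover have "is_path V E (tl q) \<and> E (hd q) (hd (tl q))"
    using assms(4) \<open>tl q \<noteq> []\<close> is_path_append[of "[hd q]" "tl q" V E] by (cases q) auto
  moreover have "set (rev (drop i P)) \<inter> set (tl q) = {}" using assms(7) set_drop_subset by fastforce
  ultimately have "is_path V E (rev (drop i P) @ tl q)"
    using assms(3) \<open>tl q \<noteq> []\<close> is_path_append[of "rev (drop i P)" "tl q"] by simp
  moreover have "set (rev (drop i P) @ tl q) \<subseteq> set P \<union> set q"
    using set_drop_subset[of i P] by (cases q) auto
  moreover have "last q \<in> set (rev (drop i P) @ tl q)"
    using \<open>tl q \<noteq> []\<close> by (metis UnCI last_in_set last_tl set_append)
  moreover have "P ! m \<in> set (rev (drop i P) @ tl q)" if "i \<le> m" "m < length P" for m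
  proof -
    have "P ! m = drop i P ! (m - i)" "m - i < length (drop i P)" using that by auto
    then show ?thesis by (metis UnI1 nth_mem set_append set_rev)
  qed
  ultimately show ?thesis using that by blast
qed

lemma bramble_attachment:
  assumes "bramble V E B" "X \<in> B" "X \<inter> set P = {}" "Y \<in> B" "Y \<inter> set P \<noteq> {}"
  obtains m q where "m < length P" "P ! m \<in> Y" "is_path V E q" "hd q = P ! m" "last q \<in> X"
    "set q \<subseteq> \<Union>B" "set (tl q) \<inter> set P = {}"
proof -
  obtain q where q: "is_path V E q" "hd q \<in> Y \<inter> set P" "last q \<in> X" "set q \<subseteq> Y \<union> X"
    "set (tl q) \<inter> set P = {}"
    using connected_touch_path_leaving[OF bramble_connected[OF assms(1,4)]
        bramble_connected[OF assms(1,2)] bramble_touch[OF assms(1,4,2)] assms(5,3)]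
    by blast
  moreover obtain m where "m < length P" "P ! m = hd q" using q(2) by (auto simp: in_set_conv_nth)
  moreover have "set q \<subseteq> \<Union>B" using q(4) assms(2,4) by blast
  ultimately show ?thesis using that by auto
qed

lemma bramble_path_extend:
  assumes "graph V E" "bramble V E B" "is_path V E P" "set P \<subseteq> \<Union>B" "X \<in> B" "X \<inter> set P = {}"
  shows "\<exists>P'. is_path V E P' \<and> set P' \<subseteq> \<Union>B
    \<and> insert X (restrict_bramble B (set P)) \<subseteq> restrict_bramble B (set P')"
proof (cases "restrict_bramble B (set P) = {}")
  case True
  obtain v where "v \<in> X" "v \<in> V"
    using bramble_connected[OF assms(2,5)] unfolding connected_set_def by blast
  then show ?thesis using True assms(5) by (intro exI[of _ "[v]"]) (auto simp: restrict_bramble_def)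
next
  case False
  define I where "I = {i. i < length P \<and> (\<exists>q. is_path V E q \<and> hd q = P ! i \<and> last q \<in> X
    \<and> set q \<subseteq> \<Union>B \<and> set (tl q) \<inter> set P = {})}"
  have attach: "\<exists>m\<in>I. P ! m \<in> Y" if "Y \<in> restrict_bramble B (set P)" for Y
  proof -
    have "Y \<in> B" "Y \<inter> set P \<noteq> {}" using that by (auto simp: restrict_bramble_def)
    then obtain m q where "m < length P" "P ! m \<in> Y" "is_path V E q" "hd q = P ! m"
      "last q \<in> X" "set q \<subseteq> \<Union>B" "set (tl q) \<inter> set P = {}"
      by (rule bramble_attachment[OF assms(2,5,6)])
    then show ?thesis unfolding I_def by auto
  qed
  \<comment> \<open>Rerouting at the least attachment index keeps all other attachment points.\<close>
  define i where "i = Min I"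
  have "finite I" unfolding I_def by simp
  moreover have "I \<noteq> {}" using attach False by blast
  ultimately have "i \<in> I" and i_min: "\<And>m. m \<in> I \<Longrightarrow> i \<le> m" unfolding i_def by auto
  then obtain q where q: "i < length P" "is_path V E q" "hd q = P ! i" "last q \<in> X"
    "set q \<subseteq> \<Union>B" "set (tl q) \<inter> set P = {}" unfolding I_def by blast
  have "last q \<notin> set P" using q(4) assms(6) by blast
  then obtain P' where P': "is_path V E P'" "set P' \<subseteq> set P \<union> set q" "last q \<in> set P'"
    "\<And>m. i \<le> m \<Longrightarrow> m < length P \<Longrightarrow> P ! m \<in> set P'"
    using path_reroute[OF assms(1,3) q(1-3) _ q(6)] by blast
  have "restrict_bramble B (set P) \<subseteq> restrict_bramble B (set P')"
  proof
    fix Y assume Y: "Y \<in> restrict_bramble B (set P)"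
    then obtain m where "m \<in> I" "P ! m \<in> Y" using attach by blast
    then have "P ! m \<in> Y \<inter> set P'" using P'(4) i_min unfolding I_def by simp
    then show "Y \<in> restrict_bramble B (set P')" using Y by (auto simp: restrict_bramble_def)
  qed
  moreover have "X \<in> restrict_bramble B (set P')"
    using P'(3) q(4) assms(5) by (auto simp: restrict_bramble_def)
  moreover have "set P' \<subseteq> \<Union>B" using P'(2) assms(4) q(5) by blast
  ultimately show ?thesis using P'(1) by blast
qed

lemma bramble_finite: "graph V E \<Longrightarrow> bramble V E B \<Longrightarrow> finite B"
  using finite_subset[of B "Pow V"] bramble_connected[of V E B]
  unfolding graph_def connected_set_def by auto

lemma bramble_path_meeting_all:
  assumes "graph V E" "bramble V E B" "B \<noteq> {}"
  shows "\<exists>P. is_path V E P \<and> set P \<subseteq> \<Union>B \<and> restrict_bramble B (set P) = B"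
proof -
  define f where "f P = card (restrict_bramble B (set P))" for P :: "'a list"
  have f_le: "f P < Suc (card B)" for P
    unfolding f_def restrict_bramble_def using bramble_finite[OF assms(1,2)]
    by (simp add: card_mono le_imp_less_Suc)
  obtain X v where "X \<in> B" "v \<in> X" "v \<in> V"
    using assms(3) bramble_connected[OF assms(2)] unfolding connected_set_def by blast
  then have "is_path V E [v] \<and> set [v] \<subseteq> \<Union>B" by auto
  then obtain P where P: "is_path V E P" "set P \<subseteq> \<Union>B"
    and P_max: "\<And>P'. is_path V E P' \<and> set P' \<subseteq> \<Union>B \<Longrightarrow> f P' \<le> f P"
    using ex_has_greatest_nat[of "\<lambda>P. is_path V E P \<and> set P \<subseteq> \<Union>B" "[v]" f "Suc (card B)"] f_le
    by blast
  have "restrict_bramble B (set P) = B"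
  proof (rule ccontr)
    assume "restrict_bramble B (set P) \<noteq> B"
    then obtain X where X: "X \<in> B" "X \<inter> set P = {}" by (auto simp: restrict_bramble_def)
    then obtain P' where P': "is_path V E P'" "set P' \<subseteq> \<Union>B"
      and grows: "insert X (restrict_bramble B (set P)) \<subseteq> restrict_bramble B (set P')"
      using bramble_path_extend[OF assms(1,2) P] by blast
    have "finite (restrict_bramble B (set P'))"
      using bramble_finite[OF assms(1,2)] by (simp add: restrict_bramble_def)
    moreover have "X \<notin> restrict_bramble B (set P)" using X by (simp add: restrict_bramble_def)
    ultimately have "f P < f P'"
      using card_mono[OF _ grows] finite_subset[OF grows] unfolding f_def by simp
    then show False using P_max P' by fastforce
  qed
  then show ?thesis using P by blast
qed

section \<open>Menger's theorem\<close>

definition separates :: "'a set \<Rightarrow> ('a \<Rightarrow> 'a \<Rightarrow> bool) \<Rightarrow> 'a set \<Rightarrow> 'a set \<Rightarrow> 'a set \<Rightarrow> bool" where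
  "separates V E A B S \<longleftrightarrow>
     (\<forall>p. is_path V E p \<and> hd p \<in> A \<and> last p \<in> B \<longrightarrow> set p \<inter> S \<noteq> {})"

definition AB_path :: "'a set \<Rightarrow> ('a \<Rightarrow> 'a \<Rightarrow> bool) \<Rightarrow> 'a set \<Rightarrow> 'a set \<Rightarrow> 'a list \<Rightarrow> bool" where
  "AB_path V E A B p \<longleftrightarrow> is_path V E p \<and> hd p \<in> A \<and> last p \<in> B
     \<and> set (tl p) \<inter> A = {} \<and> set (butlast p) \<inter> B = {}"

definition disjoint_AB_paths ::
  "'a set \<Rightarrow> ('a \<Rightarrow> 'a \<Rightarrow> bool) \<Rightarrow> 'a set \<Rightarrow> 'a set \<Rightarrow> 'a list set \<Rightarrow> bool" where
  "disjoint_AB_paths V E A B P \<longleftrightarrow> finite P \<and> (\<forall>p\<in>P. AB_path V E A B p)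
     \<and> pairwise (\<lambda>p q. disjnt (set p) (set q)) P"

definition delete_edge :: "('a \<Rightarrow> 'a \<Rightarrow> bool) \<Rightarrow> 'a \<Rightarrow> 'a \<Rightarrow> 'a \<Rightarrow> 'a \<Rightarrow> bool" where
  "delete_edge E x y = (\<lambda>u v. E u v \<and> {u, v} \<noteq> {x, y})"

lemma separates_rev:
  assumes "graph V E" "separates V E A B S"
  shows "separates V E B A S"
  unfolding separates_def
proof (intro allI impI)
  fix p assume p: "is_path V E p \<and> hd p \<in> B \<and> last p \<in> A"
  then have "p \<noteq> []" by (simp add: is_path_def)
  then have "is_path V E (rev p) \<and> hd (rev p) \<in> A \<and> last (rev p) \<in> B"
    using p is_path_rev[OF assms(1)] by (simp add: hd_rev last_rev)
  then show "set p \<inter> S \<noteq> {}" using assms(2) unfolding separates_def by fastforce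
qed

lemma separates_concat:
  assumes "separates V E A B S" "is_path V E u" "is_path V E w" "last u = hd w"
    "hd u \<in> A" "last w \<in> B"
  shows "(set u \<union> set w) \<inter> S \<noteq> {}"
proof -
  obtain r where r: "is_path V E r" "hd r = hd u" "last r = last w" "set r \<subseteq> set u \<union> set w"
    using path_concat[OF assms(2,3) disjI1[OF assms(4)]] by auto
  then have "set r \<inter> S \<noteq> {}" using assms(1,5,6) unfolding separates_def by simp
  then show ?thesis using r(4) by blast
qed

lemma AB_path_within:
  assumes "is_path V E p" "hd p \<in> A" "last p \<in> B"
  shows "\<exists>q. AB_path V E A B q \<and> set q \<subseteq> set p"
proof -
  have "hd p \<in> set p" using assms(1) by (simp add: is_path_def)
  then obtain ys a zs where p: "p = ys @ a # zs" "a \<in> A" "\<forall>z\<in>set zs. z \<notin> A"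
    using split_list_last_prop[of p "\<lambda>z. z \<in> A"] assms(2) by blast
  have "last (a # zs) \<in> set (a # zs)" by (rule last_in_set) simp
  moreover have "last (a # zs) \<in> B" using assms(3) p(1) by simp
  ultimately obtain us b ws where u: "a # zs = us @ b # ws" "b \<in> B" "\<forall>z\<in>set us. z \<notin> B"
    using split_list_first_prop[of "a # zs" "\<lambda>z. z \<in> B"] by blast
  have "is_path V E (a # zs)" using is_path_suffix assms(1) p(1) by blast
  then have "is_path V E (us @ [b])" using is_path_prefix[of V E "us @ [b]" ws] u(1) by simp
  moreover have "hd (us @ [b]) = a" "set (tl (us @ [b])) \<subseteq> set zs"
    using u(1) by (cases us; auto)+
  ultimately have "AB_path V E A B (us @ [b])"
    using p(2,3) u(2,3) unfolding AB_path_def by auto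
  moreover have "set (us @ [b]) \<subseteq> set p" using u(1) p(1) by auto
  ultimately show ?thesis by blast
qed

lemma pairwise_disjoint_inj_on:
  assumes "pairwise (\<lambda>p q. disjnt (set p) (set q)) P" "\<And>p. p \<in> P \<Longrightarrow> f p \<in> set p"
  shows "inj_on f P"
proof (rule inj_onI)
  fix p q assume pq: "p \<in> P" "q \<in> P" "f p = f q"
  show "p = q"
  proof (rule ccontr)
    assume "p \<noteq> q"
    then have "disjnt (set p) (set q)" using assms(1) pq(1,2) by (simp add: pairwise_def)
    then show False using assms(2)[OF pq(1)] assms(2)[OF pq(2)] pq(3) by (simp add: disjnt_iff)
  qed
qed

lemma disjoint_AB_paths_image:
  assumes "finite P" "\<And>p. p \<in> P \<Longrightarrow> AB_path V E A B (f p)"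
    "\<And>p q. p \<in> P \<Longrightarrow> q \<in> P \<Longrightarrow> p \<noteq> q \<Longrightarrow> disjnt (set (f p)) (set (f q))"
  shows "disjoint_AB_paths V E A B (f ` P) \<and> card (f ` P) = card P"
proof -
  have "inj_on f P"
  proof (rule inj_onI)
    fix p q assume pq: "p \<in> P" "q \<in> P" "f p = f q"
    have "f p \<noteq> []" using assms(2)[OF pq(1)] by (simp add: AB_path_def is_path_def)
    then show "p = q" using assms(3)[OF pq(1,2)] pq(3) by (auto simp: disjnt_def)
  qed
  moreover have "pairwise (\<lambda>p q. disjnt (set p) (set q)) (f ` P)"
    using assms(3) by (auto simp: pairwise_image pairwise_def)
  ultimately show ?thesis
    using assms(1,2) by (simp add: disjoint_AB_paths_def card_image)
qed

lemma disjoint_AB_paths_hd_image: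
  assumes "disjoint_AB_paths V E A B P" "finite A" "card A \<le> card P"
  shows "hd ` P = A"
proof (rule card_seteq[OF assms(2)])
  have "\<forall>p\<in>P. AB_path V E A B p" using assms(1) by (simp add: disjoint_AB_paths_def)
  then have hd_in: "hd p \<in> set p \<and> hd p \<in> A" if "p \<in> P" for p
    using that by (simp add: AB_path_def is_path_def)
  then have "inj_on hd P"
    using assms(1) pairwise_disjoint_inj_on[of P hd] by (simp add: disjoint_AB_paths_def)
  then show "card A \<le> card (hd ` P)" using assms(3) by (simp add: card_image)
  show "hd ` P \<subseteq> A" using hd_in by blast
qed

lemma delete_edge_commute: "delete_edge E y x = delete_edge E x y"
  unfolding delete_edge_def by (simp add: insert_commute)

lemma graph_delete_edge: "graph V E \<Longrightarrow> graph V (delete_edge E x y)"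
  unfolding graph_def delete_edge_def by (auto simp: insert_commute)

lemma is_path_delete_edgeD: "is_path V (delete_edge E x y) p \<Longrightarrow> is_path V E p"
  by (erule is_path_mono) (simp add: delete_edge_def)

lemma is_path_delete_edgeI:
  assumes "is_path V E p" "x \<notin> set p \<or> y \<notin> set p"
  shows "is_path V (delete_edge E x y) p"
proof -
  have "successively E p" using assms(1) by (simp add: is_path_iff_successively)
  then have "successively (delete_edge E x y) p"
    by (rule successively_mono) (use assms(2) in \<open>auto simp: delete_edge_def doubleton_eq_iff\<close>)
  then show ?thesis using assms(1) by (simp add: is_path_iff_successively)
qed

lemma disjoint_AB_paths_delete_edgeD:
  "disjoint_AB_paths V (delete_edge E x y) A B P \<Longrightarrow> disjoint_AB_paths V E A B P"
  unfolding disjoint_AB_paths_def AB_path_def using is_path_delete_edgeD by metis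

lemma card_edges_delete_edge_less:
  assumes "graph V E" "E x y"
  shows "card {(u, v). delete_edge E x y u v} < card {(u, v). E u v}"
proof (rule psubset_card_mono)
  have "{(u, v). E u v} \<subseteq> V \<times> V" using assms(1) unfolding graph_def by auto
  then show "finite {(u, v). E u v}"
    using assms(1) finite_subset unfolding graph_def by blast
  show "{(u, v). delete_edge E x y u v} \<subset> {(u, v). E u v}"
    using assms(2) unfolding delete_edge_def by auto
qed

lemma not_successively_split:
  "\<not> successively P xs \<Longrightarrow> \<exists>ys u v zs. xs = ys @ u # v # zs \<and> \<not> P u v"
proof (induction P xs rule: successively.induct)
  case (3 P x y xs)
  show ?case
  proof (cases "P x y")
    case True
    then obtain ys u v zs where "y # xs = ys @ u # v # zs" "\<not> P u v" using 3 by auto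
    then show ?thesis by (intro exI[of _ "x # ys"]) auto
  next
    case False
    then show ?thesis by (intro exI[of _ "[]"]) auto
  qed
qed simp_all

lemma path_through_deleted_edge:
  assumes "is_path V E p" "\<not> is_path V (delete_edge E a b) p"
  obtains p1 x y p2 where "p = p1 @ x # y # p2" "{x, y} = {a, b}"
proof -
  have "successively E p" using assms(1) by (simp add: is_path_iff_successively)
  moreover have "\<not> successively (delete_edge E a b) p"
    using assms by (auto simp: is_path_iff_successively)
  ultimately obtain p1 x y p2 where "p = p1 @ x # y # p2" "E x y" "\<not> delete_edge E a b x y"
    using not_successively_split[of "delete_edge E a b" p]
    by (auto simp: successively_append_iff successively_Cons)
  then show ?thesis using that by (simp add: delete_edge_def)
qed

lemma separates_delete_edge:
  assumes S: "separates V (delete_edge E x y) A B S"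
    and w: "is_path V E w" "hd w = y" "x \<notin> set w" "last w \<in> B" "set w \<inter> S = {}"
    and T: "separates V (delete_edge E x y) A (insert x S) T"
  shows "separates V E A B T"
  unfolding separates_def
proof (intro allI impI)
  let ?E' = "delete_edge E x y"
  have w': "is_path V ?E' w" by (rule is_path_delete_edgeI[OF w(1) disjI1[OF w(3)]])
  have "y \<in> set w" using w(1,2) hd_in_set[of w] by (auto simp: is_path_def)
  then have "x \<noteq> y" using w(3) by blast
  fix q assume q: "is_path V E q \<and> hd q \<in> A \<and> last q \<in> B"
  have "\<exists>v\<in>set q. v \<in> insert x S"
  proof (rule ccontr)
    assume "\<not> ?thesis"
    then have "x \<notin> set q" "set q \<inter> S = {}" by auto
    then have "is_path V ?E' q" "set q \<inter> S = {}"
      using is_path_delete_edgeI[OF _ disjI1] q by auto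
    then show False using S q unfolding separates_def by simp
  qed
  then obtain q1 v q2 where q_split: "q = q1 @ v # q2" "v \<in> insert x S"
    and q1: "\<forall>z\<in>set q1. z \<notin> insert x S"
    using split_list_first_prop[of q "\<lambda>z. z \<in> insert x S"] by blast
  have u: "is_path V E (q1 @ [v])" "hd (q1 @ [v]) \<in> A"
    using is_path_prefix[of V E "q1 @ [v]" q2] q q_split(1) by (auto simp: hd_append)
  \<comment> \<open>Had q reached y before S + x, it could continue along w to B, avoiding S in G - xy.\<close>
  have "y \<notin> set q1"
  proof
    assume "y \<in> set q1"
    then obtain a b where "q1 = a @ y # b" by (meson split_list)
    then have "is_path V E (a @ [y])" "hd (a @ [y]) \<in> A" "set (a @ [y]) \<inter> insert x S = {}"
      using is_path_prefix[of V E "a @ [y]" "b @ [v]"] u q1 by (auto simp: hd_append)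
    then have "is_path V ?E' (a @ [y])" "hd (a @ [y]) \<in> A" "set (a @ [y]) \<inter> S = {}"
      using is_path_delete_edgeI[OF _ disjI1, of V E "a @ [y]" x y] by auto
    then show False using separates_concat[OF S _ w'] w(2,4,5) by fastforce
  qed
  then have "x \<notin> set (q1 @ [v]) \<or> y \<notin> set (q1 @ [v])" using q1 \<open>x \<noteq> y\<close> by auto
  then have "is_path V ?E' (q1 @ [v])" by (rule is_path_delete_edgeI[OF u(1)])
  then have "set (q1 @ [v]) \<inter> T \<noteq> {}"
    using T u(2) q_split(2) unfolding separates_def by (metis last_snoc)
  then show "set q \<inter> T \<noteq> {}" using q_split(1) by auto
qed

lemma separates_delete_edge':
  assumes "graph V E" "separates V (delete_edge E x y) A B S"
    and "is_path V E w" "last w = x" "y \<notin> set w" "hd w \<in> A" "set w \<inter> S = {}"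
    and "separates V (delete_edge E x y) (insert y S) B T"
  shows "separates V E A B T"
proof -
  have G': "graph V (delete_edge E y x)" by (rule graph_delete_edge[OF assms(1)])
  have "w \<noteq> []" using assms(3) by (simp add: is_path_def)
  then have "is_path V E (rev w)" "hd (rev w) = x" "last (rev w) \<in> A"
    using assms(3,4,6) is_path_rev[OF assms(1)] by (auto simp: hd_rev last_rev)
  moreover have "separates V (delete_edge E y x) B A S" "separates V (delete_edge E y x) B (insert y S) T"
    using separates_rev[OF G'] assms(2,8) by (simp_all add: delete_edge_commute)
  ultimately have "separates V E B A T"
    using separates_delete_edge[of V E y x B A S "rev w" T] assms(5,7) by simp
  then show ?thesis by (rule separates_rev[OF assms(1)])
qed

lemma AB_paths_meet_in_separator:
  assumes "separates V E A B S" "S \<subseteq> X" "S \<subseteq> Y"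
    and q: "AB_path V E A X q" and r: "AB_path V E Y B r" and v: "v \<in> set q" "v \<in> set r"
  shows "v \<in> S \<and> v = last q \<and> v = hd r"
proof -
  obtain q1 q2 where q_split: "q = q1 @ v # q2" using split_list[OF v(1)] by blast
  obtain r1 r2 where r_split: "r = r1 @ v # r2" using split_list[OF v(2)] by blast
  have q2: "q2 \<noteq> [] \<Longrightarrow> v \<in> set (butlast q)" and q1: "set q1 \<subseteq> set (butlast q)"
    by (auto simp: q_split butlast_append)
  have r1: "r1 \<noteq> [] \<Longrightarrow> v \<in> set (tl r)" and r2: "set r2 \<subseteq> set (tl r)"
    by (cases r1; auto simp: r_split)+
  have "v \<in> S"
  proof (rule ccontr)
    assume "v \<notin> S"
    have "is_path V E (q1 @ [v])" "hd (q1 @ [v]) \<in> A" "set (q1 @ [v]) \<inter> S = {}"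
      using is_path_prefix[of V E "q1 @ [v]" q2] q q1 assms(2) \<open>v \<notin> S\<close>
      by (auto simp: q_split AB_path_def hd_append)
    moreover have "is_path V E (v # r2)" "last (v # r2) \<in> B" "set (v # r2) \<inter> S = {}"
      using is_path_suffix[of V E r1 "v # r2"] r r2 assms(3) \<open>v \<notin> S\<close>
      by (auto simp: r_split AB_path_def)
    ultimately show False using separates_concat[OF assms(1), of "q1 @ [v]" "v # r2"] by auto
  qed
  moreover have "v = last q"
    using q2 q \<open>v \<in> S\<close> assms(2) by (cases "q2 = []") (auto simp: q_split AB_path_def)
  moreover have "v = hd r"
    using r1 r \<open>v \<in> S\<close> assms(3) by (cases "r1 = []") (auto simp: r_split AB_path_def)
  ultimately show ?thesis by blast
qed

lemma disjoint_AB_paths_concat: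
  assumes P: "disjoint_AB_paths V E A X P" and R: "disjoint_AB_paths V E Y B R"
    and \<sigma>: "\<sigma> ` P \<subseteq> R" "inj_on \<sigma> P"
    and link: "\<And>q. q \<in> P \<Longrightarrow> last q = hd (\<sigma> q) \<or> E (last q) (hd (\<sigma> q))"
    and apart: "\<And>q q'. q \<in> P \<Longrightarrow> q' \<in> P \<Longrightarrow> q \<noteq> q' \<Longrightarrow> disjnt (set q) (set (\<sigma> q'))"
  shows "\<exists>Q. disjoint_AB_paths V E A B Q \<and> card Q = card P"
proof -
  have "\<exists>c. AB_path V E A B c \<and> set c \<subseteq> set q \<union> set (\<sigma> q)" if qP: "q \<in> P" for q
  proof -
    have "AB_path V E A X q" "AB_path V E Y B (\<sigma> q)"
      using P R \<sigma>(1) qP by (auto simp: disjoint_AB_paths_def)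
    then obtain w where "is_path V E w" "hd w \<in> A" "last w \<in> B" "set w \<subseteq> set q \<union> set (\<sigma> q)"
      using path_concat[of V E q "\<sigma> q"] link[OF qP] unfolding AB_path_def by auto
    then show ?thesis using AB_path_within[of V E w A B] by auto
  qed
  then obtain c where c: "\<And>q. q \<in> P \<Longrightarrow> AB_path V E A B (c q) \<and> set (c q) \<subseteq> set q \<union> set (\<sigma> q)"
    by metis
  have "disjnt (set (c q)) (set (c q'))" if "q \<in> P" "q' \<in> P" "q \<noteq> q'" for q q'
  proof -
    have "\<sigma> q \<noteq> \<sigma> q'" "\<sigma> q \<in> R" "\<sigma> q' \<in> R"
      using \<sigma> that by (auto simp: inj_on_def)
    then have "disjnt (set q) (set q')" "disjnt (set (\<sigma> q)) (set (\<sigma> q'))"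
      using P R that by (auto simp: disjoint_AB_paths_def pairwise_def)
    moreover have "disjnt (set q) (set (\<sigma> q'))" "disjnt (set q') (set (\<sigma> q))"
      using apart that by auto
    ultimately have "disjnt (set q \<union> set (\<sigma> q)) (set q' \<union> set (\<sigma> q'))"
      by (auto simp: disjnt_def)
    then show ?thesis using c[OF that(1)] c[OF that(2)] by (meson disjnt_subset1 disjnt_subset2)
  qed
  then have "disjoint_AB_paths V E A B (c ` P) \<and> card (c ` P) = card P"
    using disjoint_AB_paths_image[of P V E A B c] P c by (simp add: disjoint_AB_paths_def)
  then show ?thesis by blast
qed

lemma disjoint_AB_paths_link:
  assumes P: "disjoint_AB_paths V E A X P" and R: "disjoint_AB_paths V E Y B R" "hd ` R = Y"
    and \<tau>: "inj_on \<tau> X" "\<tau> ` X \<subseteq> Y" "\<And>u. u \<in> X \<Longrightarrow> \<tau> u = u \<or> E u (\<tau> u)"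
    and meet: "\<And>q r v. q \<in> P \<Longrightarrow> r \<in> R \<Longrightarrow> v \<in> set q \<Longrightarrow> v \<in> set r
      \<Longrightarrow> v = last q \<and> v = hd r \<and> \<tau> v = v"
  shows "\<exists>Q. disjoint_AB_paths V E A B Q \<and> card Q = card P"
proof -
  define \<sigma> where "\<sigma> q = inv_into R hd (\<tau> (last q))" for q
  have last_X: "last q \<in> X" if "q \<in> P" for q
    using P that by (simp add: disjoint_AB_paths_def AB_path_def)
  have \<sigma>: "\<sigma> q \<in> R" "hd (\<sigma> q) = \<tau> (last q)" if "q \<in> P" for q
  proof -
    have "\<tau> (last q) \<in> hd ` R" using \<tau>(2) R(2) last_X[OF that] by blast
    then show "\<sigma> q \<in> R" "hd (\<sigma> q) = \<tau> (last q)"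
      unfolding \<sigma>_def by (simp_all add: inv_into_into f_inv_into_f)
  qed
  have "inj_on last P"
    using P pairwise_disjoint_inj_on[of P last]
    by (simp add: disjoint_AB_paths_def AB_path_def is_path_def)
  then have \<tau>_last_eq: "q = q'" if "q \<in> P" "q' \<in> P" "\<tau> (last q) = \<tau> (last q')" for q q'
    using that last_X inj_onD[OF \<tau>(1)] inj_onD[of last P] by metis
  show ?thesis
  proof (rule disjoint_AB_paths_concat[OF P R(1)])
    show "\<sigma> ` P \<subseteq> R" using \<sigma>(1) by blast
    show "inj_on \<sigma> P" using \<sigma>(2) \<tau>_last_eq by (metis inj_onI)
    show "last q = hd (\<sigma> q) \<or> E (last q) (hd (\<sigma> q))" if "q \<in> P" for q
      using \<tau>(3)[OF last_X[OF that]] \<sigma>(2)[OF that] by auto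
    show "disjnt (set q) (set (\<sigma> q'))" if "q \<in> P" "q' \<in> P" "q \<noteq> q'" for q q'
    proof (rule ccontr)
      assume "\<not> disjnt (set q) (set (\<sigma> q'))"
      then obtain v where "v \<in> set q" "v \<in> set (\<sigma> q')" by (auto simp: disjnt_def)
      then have "v = last q" "v = hd (\<sigma> q')" "\<tau> v = v" using meet[OF that(1) \<sigma>(1)[OF that(2)]] by auto
      then show False using \<tau>_last_eq[OF that(1,2)] \<sigma>(2)[OF that(2)] that(3) by simp
    qed
  qed
qed

text \<open>Goering's step: if G - xy has a small A--B separator S, then S + x and S + y are
  large separators in G - xy, so by induction G - xy has k disjoint A--(S + x) paths and
  k disjoint (S + y)--B paths; these meet only in S, at their ends, and glue along S and xy.\<close>
lemma menger_delete_edge_step: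
  assumes G: "graph V E"
    and IH: "\<And>A B. \<forall>T\<subseteq>V. separates V (delete_edge E x y) A B T \<longrightarrow> k \<le> card T
      \<Longrightarrow> \<exists>P. disjoint_AB_paths V (delete_edge E x y) A B P \<and> card P = k"
    and big: "\<forall>T\<subseteq>V. separates V E A B T \<longrightarrow> k \<le> card T"
    and S: "S \<subseteq> V" "separates V (delete_edge E x y) A B S" "card S < k"
    and p: "is_path V E (p1 @ x # y # p2)" "hd (p1 @ x # y # p2) \<in> A"
      "last (p1 @ x # y # p2) \<in> B" "set (p1 @ x # y # p2) \<inter> S = {}"
  shows "\<exists>P. disjoint_AB_paths V E A B P \<and> card P = k"
proof -
  let ?E' = "delete_edge E x y"
  define X where "X = insert x S"
  define Y where "Y = insert y S"
  have "distinct (p1 @ x # y # p2)" using p(1) by (simp add: is_path_def)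
  then have xy: "x \<noteq> y" "x \<notin> set (y # p2)" "y \<notin> set (p1 @ [x])" by auto
  have px: "is_path V E (p1 @ [x])" and py: "is_path V E (y # p2)" and "E x y"
    using is_path_append[of "p1 @ [x]" "y # p2" V E] p(1) by simp_all
  have "hd (p1 @ [x]) \<in> A" using p(2) by (cases p1) auto
  have "\<forall>T\<subseteq>V. separates V ?E' A X T \<longrightarrow> k \<le> card T"
    using separates_delete_edge[OF S(2) py] xy p(3,4) big unfolding X_def by auto
  then obtain P where P: "disjoint_AB_paths V ?E' A X P" "card P = k" using IH by blast
  have "\<forall>T\<subseteq>V. separates V ?E' Y B T \<longrightarrow> k \<le> card T"
    using separates_delete_edge'[OF G S(2) px] xy p(4) big \<open>hd (p1 @ [x]) \<in> A\<close>
    unfolding Y_def by auto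
  then obtain R where R: "disjoint_AB_paths V ?E' Y B R" "card R = k" using IH by blast
  have "finite S" using G S(1) finite_subset unfolding graph_def by blast
  then have "hd ` R = Y"
    using disjoint_AB_paths_hd_image[OF R(1)] R(2) S(3) card_insert_le_m1 unfolding Y_def
    by (simp add: card_insert_if)
  define \<tau> where "\<tau> u = (if u = x then y else u)" for u
  have "x \<notin> S" "y \<notin> S" using p(4) by auto
  then have \<tau>: "inj_on \<tau> X" "\<tau> ` X \<subseteq> Y" "\<And>u. u \<in> X \<Longrightarrow> \<tau> u = u \<or> E u (\<tau> u)"
    using xy(1) \<open>E x y\<close> by (auto simp: \<tau>_def X_def Y_def inj_on_def)
  have meet: "v = last q \<and> v = hd r \<and> \<tau> v = v"
    if "q \<in> P" "r \<in> R" "v \<in> set q" "v \<in> set r" for q r v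
  proof -
    have "AB_path V ?E' A X q" "AB_path V ?E' Y B r"
      using P(1) R(1) that(1,2) by (simp_all add: disjoint_AB_paths_def)
    then have "v \<in> S \<and> v = last q \<and> v = hd r"
      using AB_paths_meet_in_separator[OF S(2)] that(3,4) unfolding X_def Y_def by blast
    then show ?thesis using \<open>x \<notin> S\<close> by (auto simp: \<tau>_def)
  qed
  have "\<exists>Q. disjoint_AB_paths V E A B Q \<and> card Q = card P"
    by (rule disjoint_AB_paths_link[OF disjoint_AB_paths_delete_edgeD[OF P(1)]
          disjoint_AB_paths_delete_edgeD[OF R(1)] \<open>hd ` R = Y\<close> \<tau> meet])
  then show ?thesis using P(2) by simp
qed

lemma menger_no_edges:
  assumes "\<forall>u v. \<not> E u v" "\<forall>T\<subseteq>V. separates V E A B T \<longrightarrow> k \<le> card T"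
  shows "\<exists>P. disjoint_AB_paths V E A B P \<and> card P = k"
proof -
  have single: "\<exists>v. p = [v]" if "is_path V E p" for p
    using that assms(1) by (cases p rule: remdups_adj.cases) (auto simp: is_path_iff_successively)
  have "separates V E A B (A \<inter> B \<inter> V)"
    unfolding separates_def
  proof (intro allI impI)
    fix p assume p: "is_path V E p \<and> hd p \<in> A \<and> last p \<in> B"
    then obtain v where "p = [v]" using single by blast
    then show "set p \<inter> (A \<inter> B \<inter> V) \<noteq> {}" using p by auto
  qed
  then have "k \<le> card (A \<inter> B \<inter> V)" using assms(2) by simp
  then obtain T where T: "T \<subseteq> A \<inter> B \<inter> V" "card T = k" "finite T"
    by (meson obtain_subset_with_card_n)
  have "disjoint_AB_paths V E A B ((\<lambda>v. [v]) ` T) \<and> card ((\<lambda>v. [v]) ` T) = card T"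
    by (rule disjoint_AB_paths_image) (use T in \<open>auto simp: AB_path_def\<close>)
  then show ?thesis using T(2) by blast
qed

theorem menger:
  assumes "graph V E" "\<forall>S\<subseteq>V. separates V E A B S \<longrightarrow> k \<le> card S"
  shows "\<exists>P. disjoint_AB_paths V E A B P \<and> card P = k"
  using assms
proof (induction "card {(u, v). E u v}" arbitrary: E A B rule: less_induct)
  case less
  show ?case
  proof (cases "\<exists>a b. E a b")
    case False
    then show ?thesis using menger_no_edges[OF _ less.prems(2)] by simp
  next
    case True
    then obtain a b where "E a b" by blast
    have IH: "\<exists>P. disjoint_AB_paths V (delete_edge E a b) A' B' P \<and> card P = k"
      if "\<forall>S\<subseteq>V. separates V (delete_edge E a b) A' B' S \<longrightarrow> k \<le> card S" for A' B'
      using less.hyps[OF card_edges_delete_edge_less[OF less.prems(1) \<open>E a b\<close>]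
          graph_delete_edge[OF less.prems(1)] that] by blast
    show ?thesis
    proof (cases "\<forall>S\<subseteq>V. separates V (delete_edge E a b) A B S \<longrightarrow> k \<le> card S")
      case True
      then obtain P where "disjoint_AB_paths V (delete_edge E a b) A B P" "card P = k"
        using IH by blast
      then show ?thesis using disjoint_AB_paths_delete_edgeD[of V E a b A B P] by blast
    next
      case False
      then obtain S where S: "S \<subseteq> V" "separates V (delete_edge E a b) A B S" "card S < k"
        by (meson not_le)
      then obtain p where p: "is_path V E p" "hd p \<in> A" "last p \<in> B" "set p \<inter> S = {}"
        using less.prems(2) unfolding separates_def by (meson not_le)
      then have "\<not> is_path V (delete_edge E a b) p" using S(2) unfolding separates_def by blast
      then obtain p1 x y p2 where xy: "p = p1 @ x # y # p2" "{x, y} = {a, b}"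
        using path_through_deleted_edge[OF p(1)] by blast
      then have E': "delete_edge E a b = delete_edge E x y" by (simp add: delete_edge_def)
      show ?thesis
        using menger_delete_edge_step[OF less.prems(1) IH[unfolded E'] less.prems(2) S(1)
            S(2)[unfolded E'] S(3)] p xy(1) by blast
    qed
  qed
qed

section \<open>Two disjoint paths of bramble order t\<close>

lemma bramble_subset: "bramble V E B \<Longrightarrow> B' \<subseteq> B \<Longrightarrow> bramble V E B'"
  unfolding bramble_def by blast

lemma bramble_hitting_set_carrier:
  assumes "bramble V E B"
  shows "hitting_set V B V"
proof -
  have "X \<noteq> {}" "X \<subseteq> V" if "X \<in> B" for X
    using bramble_connected[OF assms that] unfolding connected_set_def by auto
  then show ?thesis unfolding hitting_set_def by blast
qed

lemma bramble_path_of_order: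
  assumes G: "graph V E" and B: "bramble V E B" and "B' \<subseteq> B" "1 \<le> t" "t \<le> bramble_order V B'"
  shows "\<exists>P. is_path V E P \<and> set P \<subseteq> \<Union>B' \<and> bramble_order V (restrict_bramble B (set P)) = t"
proof -
  have hits: "hitting_set V B V" by (rule bramble_hitting_set_carrier[OF B])
  have "B' \<noteq> {}" using assms(4,5) by auto
  then obtain P where P: "is_path V E P" "set P \<subseteq> \<Union>B'" "restrict_bramble B' (set P) = B'"
    using bramble_path_meeting_all[OF G bramble_subset[OF B assms(3)]] by blast
  have "B' \<subseteq> restrict_bramble B (set P)"
    using P(3) assms(3) unfolding restrict_bramble_def by blast
  moreover have "hitting_set V (restrict_bramble B (set P)) V"
    using hits by (rule hitting_set_subset) (auto simp: restrict_bramble_def)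
  ultimately have "t \<le> bramble_order V (restrict_bramble B (set P))"
    using bramble_order_mono assms(5) le_trans by blast
  moreover have "set P \<subseteq> V" using P(1) by (simp add: is_path_def)
  ultimately obtain n where n: "bramble_order V (restrict_bramble B (set (take n P))) = t"
    using bramble_order_take[OF hits] by blast
  moreover have "n \<noteq> 0"
  proof
    assume "n = 0"
    then have "bramble_order V (restrict_bramble B (set (take n P))) = 0"
      by (simp add: restrict_bramble_def)
    then show False using n assms(4) by simp
  qed
  moreover have "set (take n P) \<subseteq> \<Union>B'" using P(2) set_take_subset by fastforce
  ultimately show ?thesis using is_path_take[OF P(1)] by blast
qed

lemma bramble_disjoint_paths_of_order:
  assumes G: "graph V E" and B: "bramble V E B" "1 \<le> t" "2 * t + 1 \<le> bramble_order V B"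
  shows "\<exists>P1 P2. is_path V E P1 \<and> is_path V E P2 \<and> set P1 \<inter> set P2 = {}
    \<and> bramble_order V (restrict_bramble B (set P1)) = t
    \<and> bramble_order V (restrict_bramble B (set P2)) = t"
proof -
  have hits: "hitting_set V B V" by (rule bramble_hitting_set_carrier[OF B(1)])
  obtain P1 where P1: "is_path V E P1" "bramble_order V (restrict_bramble B (set P1)) = t"
    using bramble_path_of_order[OF G B(1) order_refl B(2)] B(3) by auto
  define B' where "B' = {X\<in>B. X \<inter> set P1 = {}}"
  have "B = restrict_bramble B (set P1) \<union> B'" unfolding B'_def restrict_bramble_def by blast
  moreover have "hitting_set V (restrict_bramble B (set P1)) V" "hitting_set V B' V"
    using hits by (auto intro: hitting_set_subset simp: B'_def restrict_bramble_def)
  ultimately have "bramble_order V B \<le> t + bramble_order V B'"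
    using bramble_order_Un_le P1(2) by metis
  then have "t \<le> bramble_order V B'" using B(3) by simp
  moreover have "B' \<subseteq> B" unfolding B'_def by blast
  ultimately obtain P2 where P2: "is_path V E P2" "set P2 \<subseteq> \<Union>B'"
    "bramble_order V (restrict_bramble B (set P2)) = t"
    using bramble_path_of_order[OF G B(1) _ B(2)] by blast
  have "set P1 \<inter> set P2 = {}" using P2(2) unfolding B'_def by blast
  then show ?thesis using P1 P2 by blast
qed

lemma bramble_order_le_separator:
  assumes "bramble V E B" "S \<subseteq> V" "separates V E A C S"
  shows "min (bramble_order V (restrict_bramble B A)) (bramble_order V (restrict_bramble B C))
    \<le> card S"
proof (rule ccontr)
  assume "\<not> ?thesis"
  then have "card S < bramble_order V (restrict_bramble B A)"
    "card S < bramble_order V (restrict_bramble B C)" by auto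
  then have "\<not> hitting_set V (restrict_bramble B A) S" "\<not> hitting_set V (restrict_bramble B C) S"
    using bramble_order_le_card by (meson not_le)+
  then obtain X Y where X: "X \<in> B" "X \<inter> A \<noteq> {}" "S \<inter> X = {}"
    and Y: "Y \<in> B" "Y \<inter> C \<noteq> {}" "S \<inter> Y = {}"
    using assms(2) unfolding hitting_set_def restrict_bramble_def by blast
  obtain a b where ab: "a \<in> X \<inter> A" "b \<in> Y \<inter> C" using X(2) Y(2) by blast
  obtain p where p: "is_path V E p" "hd p = a" "last p = b" "set p \<subseteq> X \<union> Y"
    using connected_touch_path[OF bramble_connected[OF assms(1) X(1)]
        bramble_connected[OF assms(1) Y(1)] bramble_touch[OF assms(1) X(1) Y(1)]] ab by blast
  then have "set p \<inter> S \<noteq> {}" using assms(3) ab unfolding separates_def by simp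
  then show False using p(4) X(3) Y(3) by blast
qed

lemma inner_vertices_AB_path: "AB_path V E A B p \<Longrightarrow> inner_vertices p \<inter> (A \<union> B) = {}"
  unfolding AB_path_def inner_vertices_def
  by (metis (no_types, lifting) butlast_tl disjoint_iff in_set_butlastD list.set_sel(2)
      Un_iff tl_Nil)

lemma disjoint_AB_paths_enumerate:
  assumes "disjoint_AB_paths V E A B Qs" "card Qs = t"
  obtains Q where "\<And>i. i < t \<Longrightarrow> AB_path V E A B (Q i)"
    "\<And>i j. i < t \<Longrightarrow> j < t \<Longrightarrow> i \<noteq> j \<Longrightarrow> set (Q i) \<inter> set (Q j) = {}"
proof -
  obtain Q where Q: "bij_betw Q {..<t} Qs"
    using assms ex_bij_betw_nat_finite[of Qs] by (auto simp: disjoint_AB_paths_def atLeast0LessThan)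
  have Q_in: "Q i \<in> Qs" if "i < t" for i using Q that by (auto simp: bij_betw_def)
  show ?thesis
  proof (rule that)
    show "AB_path V E A B (Q i)" if "i < t" for i
      using Q_in[OF that] assms(1) by (simp add: disjoint_AB_paths_def)
    show "set (Q i) \<inter> set (Q j) = {}" if "i < t" "j < t" "i \<noteq> j" for i j
    proof -
      have "Q i \<noteq> Q j" using Q that by (auto simp: bij_betw_def inj_on_def)
      then show ?thesis
        using Q_in that(1,2) assms(1) by (simp add: disjoint_AB_paths_def pairwise_def disjnt_def)
    qed
  qed
qed

theorem lemma2p5:
  fixes V :: "'a set" and E :: "'a \<Rightarrow> 'a \<Rightarrow> bool" and B :: "'a set set" and t :: nat
  assumes "graph V E"
    and "bramble V E B"
    and "t \<ge> 1"
    and "bramble_order V B \<ge> 2 * t + 1"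
  shows "\<exists>P1 P2 Q.
     is_path V E P1 \<and> is_path V E P2 \<and> set P1 \<inter> set P2 = {} \<and>
     bramble_order V (restrict_bramble B (set P1)) = t \<and>
     bramble_order V (restrict_bramble B (set P2)) = t \<and>
     (\<forall>i<t. is_path V E (Q i) \<and>
        ((hd (Q i) \<in> set P1 \<and> last (Q i) \<in> set P2) \<or>
         (hd (Q i) \<in> set P2 \<and> last (Q i) \<in> set P1)) \<and>
        inner_vertices (Q i) \<inter> (set P1 \<union> set P2) = {}) \<and>
     (\<forall>i<t. \<forall>j<t. i \<noteq> j \<longrightarrow> set (Q i) \<inter> set (Q j) = {})"
proof -
  obtain P1 P2 where P: "is_path V E P1" "is_path V E P2" "set P1 \<inter> set P2 = {}"
    "bramble_order V (restrict_bramble B (set P1)) = t"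
    "bramble_order V (restrict_bramble B (set P2)) = t"
    using bramble_disjoint_paths_of_order[OF assms] by blast
  have "\<forall>S\<subseteq>V. separates V E (set P1) (set P2) S \<longrightarrow> t \<le> card S"
    using bramble_order_le_separator[OF assms(2)] P(4,5) by (metis min.idem)
  then obtain Qs where Qs: "disjoint_AB_paths V E (set P1) (set P2) Qs" "card Qs = t"
    using menger[OF assms(1)] by blast
  obtain Q where AB: "\<And>i. i < t \<Longrightarrow> AB_path V E (set P1) (set P2) (Q i)"
    and disj: "\<And>i j. i < t \<Longrightarrow> j < t \<Longrightarrow> i \<noteq> j \<Longrightarrow> set (Q i) \<inter> set (Q j) = {}"
    using disjoint_AB_paths_enumerate[OF Qs] by blast
  have "is_path V E (Q i) \<and> hd (Q i) \<in> set P1 \<and> last (Q i) \<in> set P2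
      \<and> inner_vertices (Q i) \<inter> (set P1 \<union> set P2) = {}" if "i < t" for i
    using AB[OF that] inner_vertices_AB_path[OF AB[OF that]] unfolding AB_path_def by simp
  then show ?thesis using P disj by (intro exI[of _ P1] exI[of _ P2] exI[of _ Q]) simp
qed

end
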